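(* Let $\mathcal{A}$ be a weighted pushdown system with state set $Q$ and stack alphabet $\Gamma$, and let $\pi$ be a finite path of $\mathcal{A}$ with additional stack height $\mathrm{ASH}(\pi) = d \geq (|Q|\cdot|\Gamma|)^2$. Then $\pi$ has a pumpable pair of paths.
   Context: A stack command over a finite alphabet $\Gamma$ is one of $\mathit{skip}$ (no change), $\mathit{pop}$ (delete top symbol), $\mathit{push}(z)$ for $z\in\Gamma$ (put $z$ on top). A weighted pushdown system (WPS) is $\mathcal{A}=\langle Q,\Gamma,q_0,E,w\rangle$ with finite state set $Q$, initial state $q_0\in Q$, finite stack alphabet $\Gamma$ containing a special bottom symbol $\bot$ that can be neither pushed nor popped, edge set $E\subseteq (Q\times\Gamma)\times(Q\times\mathrm{Com}(\Gamma))$ and integer weights $w:E\to\mathbb{Z}$. A configuration is a pair $(\alpha,q)$ with $\alpha\in\Gamma^+$ a stack string (top is the last symbol) and $q\in Q$; the initial configuration is $(\bot,q_0)$. $(\alpha',q')$ is a successor of $(\alpha,q)$ if there is an edge $(q,\gamma,q',\mathit{com})\in E$ with $\gamma$ the top symbol of $\alpha$ and $\alpha'=\mathit{com}(\alpha)$. A path is a (finite or infinite) sequence of configurations each of which is a successor of the previous one; equivalently it is a start configuration followed by the sequence of edges used. The stack height $\mathrm{SH}(\pi)$ of a finite path $\pi=\langle(\alpha_1,q_1),\dots,(\alpha_n,q_n)\rangle$ is $\max_i|\alpha_i|$, and its additional stack height is $\mathrm{ASH}(\pi)=\mathrm{SH}(\pi)-\max\{|\alpha_1|,|\alpha_n|\}$.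 For a path $\pi=\langle c_1 e_1 e_2\dots\rangle$, a pumpable pair is a pair $(p_1,p_2)$ of nonempty blocks of consecutive edges $p_1=e_{i_1}\dots e_{i_1+n_1}$, $p_2=e_{i_2}\dots e_{i_2+n_2}$ with $i_2>i_1+n_1$, such that for every $j\geq 0$ the sequence obtained from $\pi$ by replacing $p_1$ by $p_1^j$ and $p_2$ by $p_2^j$ (denoted $\pi^j_{(p_1,p_2)}$) is again a valid path from $c_1$. *)

theory Defs
  imports Main
begin

datatype 'g com = Skip | Pop | Push 'g

text \<open>Stacks are lists; the top symbol is the LAST element of the list.\<close>
fun apply_com :: "'g com \<Rightarrow> 'g list \<Rightarrow> 'g list" where
  "apply_com Skip \<alpha> = \<alpha>"
| "apply_com Pop \<alpha> = butlast \<alpha>"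
| "apply_com (Push z) \<alpha> = \<alpha> @ [z]"

definition Com :: "'g set \<Rightarrow> 'g com set" where
  "Com \<Gamma> = {Skip, Pop} \<union> Push ` \<Gamma>"

type_synonym ('q, 'g) edge = "('q \<times> 'g) \<times> ('q \<times> 'g com)"
type_synonym ('q, 'g) config = "'g list \<times> 'q"

definition wps :: "'q set \<Rightarrow> 'g set \<Rightarrow> 'g \<Rightarrow> 'q \<Rightarrow> ('q, 'g) edge set \<Rightarrow> (('q, 'g) edge \<Rightarrow> int) \<Rightarrow> bool" where
  "wps Q \<Gamma> bt q0 E w \<longleftrightarrow>
     finite Q \<and> finite \<Gamma> \<and> q0 \<in> Q \<and> bt \<in> \<Gamma> \<and>
     E \<subseteq> (Q \<times> \<Gamma>) \<times> (Q \<times> Com \<Gamma>) \<and>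
     (\<forall>q q'. ((q, bt), (q', Pop)) \<notin> E) \<and>
     (\<forall>q \<gamma> q'. ((q, \<gamma>), (q', Push bt)) \<notin> E)"

fun step :: "('q, 'g) edge \<Rightarrow> ('q, 'g) config \<Rightarrow> ('q, 'g) config" where
  "step ((q, \<gamma>), (q', c)) (\<alpha>, p) = (apply_com c \<alpha>, q')"

definition is_config :: "'q set \<Rightarrow> 'g set \<Rightarrow> ('q, 'g) config \<Rightarrow> bool" where
  "is_config Q \<Gamma> c \<longleftrightarrow> fst c \<noteq> [] \<and> set (fst c) \<subseteq> \<Gamma> \<and> snd c \<in> Q"

definition enabled :: "'q set \<Rightarrow> 'g set \<Rightarrow> ('q, 'g) edge set \<Rightarrow> ('q, 'g) edge \<Rightarrow> ('q, 'g) config \<Rightarrow> bool" where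
  "enabled Q \<Gamma> E e c \<longleftrightarrow> e \<in> E \<and> fst (fst e) = snd c \<and> fst c \<noteq> [] \<and>
      snd (fst e) = last (fst c) \<and> is_config Q \<Gamma> (step e c)"

text \<open>A finite path: start configuration c followed by the list of edges used.\<close>
fun valid_path :: "'q set \<Rightarrow> 'g set \<Rightarrow> ('q, 'g) edge set \<Rightarrow> ('q, 'g) config \<Rightarrow> ('q, 'g) edge list \<Rightarrow> bool" where
  "valid_path Q \<Gamma> E c [] = is_config Q \<Gamma> c"
| "valid_path Q \<Gamma> E c (e # es) = (is_config Q \<Gamma> c \<and> enabled Q \<Gamma> E e c \<and> valid_path Q \<Gamma> E (step e c) es)"

fun configs :: "('q, 'g) config \<Rightarrow> ('q, 'g) edge list \<Rightarrow> ('q, 'g) config list" where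
  "configs c [] = [c]"
| "configs c (e # es) = c # configs (step e c) es"

definition SH :: "('q, 'g) config \<Rightarrow> ('q, 'g) edge list \<Rightarrow> nat" where
  "SH c es = Max (set (map (\<lambda>x. length (fst x)) (configs c es)))"

definition ASH :: "('q, 'g) config \<Rightarrow> ('q, 'g) edge list \<Rightarrow> nat" where
  "ASH c es = SH c es - max (length (fst (hd (configs c es)))) (length (fst (last (configs c es))))"

definition pumpable_pair :: "'q set \<Rightarrow> 'g set \<Rightarrow> ('q, 'g) edge set \<Rightarrow> ('q, 'g) config \<Rightarrow> ('q, 'g) edge list
    \<Rightarrow> ('q, 'g) edge list \<Rightarrow> ('q, 'g) edge list \<Rightarrow> bool" where
  "pumpable_pair Q \<Gamma> E c es p1 p2 \<longleftrightarrow> p1 \<noteq> [] \<and> p2 \<noteq> [] \<and>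
     (\<exists>u v x. es = u @ p1 @ v @ p2 @ x \<and>
        (\<forall>j::nat. valid_path Q \<Gamma> E c (u @ concat (replicate j p1) @ v @ concat (replicate j p2) @ x)))"

end

theory Submission imports Defs begin

(*
  Write ht i for the stack height after the first i edges of the path, fix a
  point t where the maximum H = SH is attained and put m = max (ht 0) (ht n),
  so that ASH = H - m. Heights change by at most one per edge, hence for every
  level k in {m..H} the last point a_k <= t and the first point b_k >= t of
  height at most k both have height exactly k, and the height stays >= k on
  [a_k, b_k]; these intervals shrink as k grows. Recording the state and top
  symbol at a_k and at b_k takes at most (|Q| |Gamma|)^2 values on the
  d + 1 > (|Q| |Gamma|)^2 levels, so two levels k < k' give equal records.
  Between a_k and a_k' the path pushes a block B and returns to the same state
  and top symbol; between b_k' and b_k it pops B again; no part of the path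
  inspects the stack below these levels. Hence both pieces can be repeated
  j times simultaneously: this is the pumpable pair.
*)

lemma valid_is_config: "valid_path Q \<Gamma> E c es \<Longrightarrow> is_config Q \<Gamma> c"
  by (cases es) auto

lemma valid_append:
  "valid_path Q \<Gamma> E c (xs @ ys) \<longleftrightarrow> valid_path Q \<Gamma> E c xs \<and> valid_path Q \<Gamma> E (fold step xs c) ys"
  by (induction xs arbitrary: c) (auto dest: valid_is_config)

lemma valid_final: "valid_path Q \<Gamma> E c es \<Longrightarrow> is_config Q \<Gamma> (fold step es c)"
  using valid_append[of Q \<Gamma> E c es "[]"] by simp

lemma valid_configs: "valid_path Q \<Gamma> E c es \<Longrightarrow> x \<in> set (configs c es) \<Longrightarrow> is_config Q \<Gamma> x"
  by (induction es arbitrary: c) auto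

definition cfg :: "('q, 'g) config \<Rightarrow> ('q, 'g) edge list \<Rightarrow> nat \<Rightarrow> ('q, 'g) config" where
  "cfg c es i = fold step (take i es) c"

definition ht :: "('q, 'g) config \<Rightarrow> ('q, 'g) edge list \<Rightarrow> nat \<Rightarrow> nat" where
  "ht c es i = length (fst (cfg c es i))"

definition seg :: "'a list \<Rightarrow> nat \<Rightarrow> nat \<Rightarrow> 'a list" where
  "seg es i j = drop i (take j es)"

lemma length_configs [simp]: "length (configs c es) = Suc (length es)"
  by (induction es arbitrary: c) auto

lemma configs_conv_cfg: "i \<le> length es \<Longrightarrow> configs c es ! i = cfg c es i"
proof (induction es arbitrary: c i)
  case (Cons e es)
  then show ?case by (cases i) (auto simp: cfg_def)
qed (simp add: cfg_def)

lemma set_configs: "set (configs c es) = cfg c es ` {..length es}"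
proof -
  have "set (configs c es) = (\<lambda>i. configs c es ! i) ` {..<Suc (length es)}"
    by (metis length_configs list.set_map map_nth set_upt atLeast0LessThan)
  also have "\<dots> = cfg c es ` {..length es}"
    by (auto simp: configs_conv_cfg lessThan_Suc_atMost)
  finally show ?thesis .
qed

lemma take_conv_seg: "i \<le> j \<Longrightarrow> take j es = take i es @ seg es i j"
  unfolding seg_def by (metis append_take_drop_id min.absorb1 take_take)

lemma seg_decompose:
  assumes "a \<le> a'" "a' \<le> b'" "b' \<le> b"
  shows "es = take a es @ seg es a a' @ seg es a' b' @ seg es b' b @ drop b es"
proof -
  have "take b es = take a es @ seg es a a' @ seg es a' b' @ seg es b' b"
    using take_conv_seg[OF assms(1), of es] take_conv_seg[OF assms(2), of es]
      take_conv_seg[OF assms(3), of es] by simp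
  then show ?thesis
    by (metis append_assoc append_take_drop_id)
qed

lemma cfg_seg: "i \<le> j \<Longrightarrow> fold step (seg es i j) (cfg c es i) = cfg c es j"
  by (simp add: cfg_def take_conv_seg[of i j es])

lemma valid_take: "valid_path Q \<Gamma> E c es \<Longrightarrow> valid_path Q \<Gamma> E c (take j es)"
  using valid_append[of Q \<Gamma> E c "take j es" "drop j es"] by simp

lemma valid_seg:
  "valid_path Q \<Gamma> E c es \<Longrightarrow> i \<le> j \<Longrightarrow> valid_path Q \<Gamma> E (cfg c es i) (seg es i j)"
  using valid_take[of Q \<Gamma> E c es j] by (simp add: take_conv_seg[of i j es] valid_append cfg_def)

lemma valid_drop:
  "valid_path Q \<Gamma> E c es \<Longrightarrow> valid_path Q \<Gamma> E (cfg c es i) (drop i es)"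
  using valid_append[of Q \<Gamma> E c "take i es" "drop i es"] by (simp add: cfg_def)

lemma cfg_is_config:
  "valid_path Q \<Gamma> E c es \<Longrightarrow> i \<le> length es \<Longrightarrow> is_config Q \<Gamma> (cfg c es i)"
  using valid_configs[of Q \<Gamma> E c es] by (auto simp: set_configs)

lemma cfg_cfg_seg:
  "i + l \<le> j \<Longrightarrow> cfg (cfg c es i) (seg es i j) l = cfg c es (i + l)"
proof -
  assume "i + l \<le> j"
  then have split: "take (i + l) es = take i es @ take l (drop i (take j es))"
    using take_add[of i l "take j es"] by (simp add: min_def)
  show ?thesis
    unfolding cfg_def seg_def split by simp
qed

lemma length_seg: "j \<le> length es \<Longrightarrow> length (seg es i j) = j - i"
  by (simp add: seg_def)

lemma set_configs_seg:
  assumes "i \<le> j" "j \<le> length es"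
  shows "set (configs (cfg c es i) (seg es i j)) = cfg c es ` {i..j}"
proof -
  have "set (configs (cfg c es i) (seg es i j)) = cfg (cfg c es i) (seg es i j) ` {0..j - i}"
    using assms by (simp add: set_configs length_seg atLeast0AtMost)
  also have "\<dots> = (\<lambda>l. cfg c es (i + l)) ` {0..j - i}"
    using assms by (intro image_cong) (simp_all add: cfg_cfg_seg)
  also have "\<dots> = cfg c es ` ((+) i ` {0..j - i})"
    by (simp only: image_image)
  also have "(+) i ` {0..j - i} = {i..j}"
    using assms by (simp add: image_add_atLeastAtMost add.commute[of i])
  finally show ?thesis .
qed

lemma length_step:
  "length (fst (step e x)) \<le> Suc (length (fst x)) \<and> length (fst x) \<le> Suc (length (fst (step e x)))"
  by (cases e; cases x; cases "snd (snd e)") auto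

lemma ht_unit_steps:
  "\<forall>i < length es. ht c es (Suc i) \<le> Suc (ht c es i) \<and> ht c es i \<le> Suc (ht c es (Suc i))"
proof (intro allI impI)
  fix i assume "i < length es"
  then have "cfg c es (Suc i) = step (es ! i) (cfg c es i)"
    by (simp add: cfg_def take_Suc_conv_app_nth)
  then show "ht c es (Suc i) \<le> Suc (ht c es i) \<and> ht c es i \<le> Suc (ht c es (Suc i))"
    using length_step[of "es ! i" "cfg c es i"] by (simp add: ht_def)
qed

lemma SH_conv_ht: "SH c es = Max (ht c es ` {..length es})"
  by (simp add: SH_def set_configs image_image ht_def)

lemma ASH_conv_ht: "ASH c es = SH c es - max (ht c es 0) (ht c es (length es))"
proof -
  have "hd (configs c es) = cfg c es 0"
    by (cases es) (simp_all add: cfg_def)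
  moreover have "last (configs c es) = cfg c es (length es)"
    by (metis configs_conv_cfg last_conv_nth length_configs list.size(3) nat.distinct(1) diff_Suc_1 order_refl)
  ultimately show ?thesis
    by (simp add: ASH_def ht_def)
qed

lemma SH_attained: "\<exists>t \<le> length es. ht c es t = SH c es"
proof -
  have "SH c es \<in> ht c es ` {..length es}"
    unfolding SH_conv_ht by (rule Max_in) auto
  then show ?thesis by auto
qed

(* The edge list p leads from every stack P @ X in state q to P @ Y in state q',
  whatever the bottom part P over the alphabet is: p never looks below X. *)
definition moves :: "'q set \<Rightarrow> 'g set \<Rightarrow> ('q, 'g) edge set \<Rightarrow> ('q, 'g) edge list \<Rightarrow>
    'g list \<Rightarrow> 'q \<Rightarrow> 'g list \<Rightarrow> 'q \<Rightarrow> bool" where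
  "moves Q \<Gamma> E p X q Y q' \<longleftrightarrow>
     (\<forall>P. set P \<subseteq> \<Gamma> \<longrightarrow> valid_path Q \<Gamma> E (P @ X, q) p \<and> fold step p (P @ X, q) = (P @ Y, q'))"

lemma moves_append:
  "moves Q \<Gamma> E p X q Y q' \<Longrightarrow> moves Q \<Gamma> E p' Y q' Z q'' \<Longrightarrow> moves Q \<Gamma> E (p @ p') X q Z q''"
  by (auto simp: moves_def valid_append)

lemma moves_below:
  assumes "moves Q \<Gamma> E p X q Y q'" "set B \<subseteq> \<Gamma>"
  shows "moves Q \<Gamma> E p (B @ X) q (B @ Y) q'"
  unfolding moves_def
proof (intro allI impI)
  fix P assume "set P \<subseteq> \<Gamma>"
  then show "valid_path Q \<Gamma> E (P @ B @ X, q) p \<and> fold step p (P @ B @ X, q) = (P @ B @ Y, q')"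
    using assms unfolding moves_def by (metis append_assoc le_sup_iff set_append)
qed

lemma step_append_below:
  "r \<noteq> [] \<Longrightarrow> step e (pre @ r, q) = (pre @ fst (step e (r, q)), snd (step e (r, q)))"
  by (cases e; cases "snd (snd e)") (auto simp: butlast_append)

lemma moves_step:
  assumes "is_config Q \<Gamma> (pre @ r, q)" "enabled Q \<Gamma> E e (pre @ r, q)"
    and "r \<noteq> []" "fst (step e (r, q)) \<noteq> []"
  shows "moves Q \<Gamma> E [e] r q (fst (step e (r, q))) (snd (step e (r, q)))"
  unfolding moves_def
proof (intro allI impI)
  fix P assume "set P \<subseteq> \<Gamma>"
  moreover have "step e (X @ r, q) = (X @ fst (step e (r, q)), snd (step e (r, q)))" for X
    using step_append_below[OF assms(3)] .
  ultimately show "valid_path Q \<Gamma> E (P @ r, q) [e] \<and>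
      fold step [e] (P @ r, q) = (P @ fst (step e (r, q)), snd (step e (r, q)))"
    using assms by (auto simp: enabled_def is_config_def)
qed

lemma moves_above:
  assumes "valid_path Q \<Gamma> E (pre @ r, q) es"
    and "\<forall>x \<in> set (configs (pre @ r, q) es). length pre < length (fst x)"
  shows "\<exists>r'. fst (fold step es (pre @ r, q)) = pre @ r' \<and>
     moves Q \<Gamma> E es r q r' (snd (fold step es (pre @ r, q)))"
  using assms
proof (induction es arbitrary: r q)
  case Nil
  then have "moves Q \<Gamma> E [] r q r q"
    by (auto simp: moves_def is_config_def)
  then show ?case by auto
next
  case (Cons e es)
  define r1 q1 where "r1 = fst (step e (r, q))" and "q1 = snd (step e (r, q))"
  have "r \<noteq> []"
    using Cons.prems(2) by auto
  then have st: "step e (pre @ r, q) = (pre @ r1, q1)"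
    using step_append_below by (simp add: r1_def q1_def)
  have above: "\<forall>x \<in> set (configs (pre @ r1, q1) es). length pre < length (fst x)"
    using Cons.prems(2) st by auto
  then have "r1 \<noteq> []"
    by (cases es) auto
  then have "moves Q \<Gamma> E [e] r q r1 q1"
    using moves_step[of Q \<Gamma> pre r q E e] Cons.prems(1) \<open>r \<noteq> []\<close> by (simp add: r1_def q1_def)
  moreover obtain r' where "fst (fold step es (pre @ r1, q1)) = pre @ r'"
    and "moves Q \<Gamma> E es r1 q1 r' (snd (fold step es (pre @ r1, q1)))"
    using Cons.IH[OF _ above] Cons.prems(1) st by auto
  ultimately show ?case
    using moves_append[of Q \<Gamma> E "[e]"] st by auto
qed

lemma seg_moves:
  assumes "valid_path Q \<Gamma> E c es" "i \<le> j" "j \<le> length es"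
    and "cfg c es i = (pre @ r, q)"
    and "\<forall>l \<in> {i..j}. length pre < ht c es l"
  shows "\<exists>r'. fst (cfg c es j) = pre @ r' \<and> moves Q \<Gamma> E (seg es i j) r q r' (snd (cfg c es j))"
proof -
  have "valid_path Q \<Gamma> E (pre @ r, q) (seg es i j)"
    using valid_seg[OF assms(1,2)] assms(4) by simp
  moreover have "\<forall>x \<in> set (configs (pre @ r, q) (seg es i j)). length pre < length (fst x)"
    using assms(2-5) set_configs_seg[OF assms(2,3), of c] by (auto simp: ht_def)
  moreover have "fold step (seg es i j) (pre @ r, q) = cfg c es j"
    using cfg_seg[OF assms(2), of es c] assms(4) by simp
  ultimately show ?thesis
    using moves_above by metis
qed

lemma moves_pump_up:
  assumes "moves Q \<Gamma> E p X q (B @ X) q" "set B \<subseteq> \<Gamma>"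
  shows "moves Q \<Gamma> E (concat (replicate j p)) X q (concat (replicate j B) @ X) q"
proof (induction j)
  case 0
  show ?case
    using assms(1) by (auto simp: moves_def dest: valid_is_config)
next
  case (Suc j)
  then show ?case
    using moves_append[OF assms(1) moves_below[OF Suc assms(2)]] by simp
qed

lemma moves_pump_down:
  assumes "moves Q \<Gamma> E p (B @ Y) q Y q" "set B \<subseteq> \<Gamma>"
  shows "moves Q \<Gamma> E (concat (replicate j p)) (concat (replicate j B) @ Y) q Y q"
proof (induction j)
  case 0
  show ?case
    using assms(1) by (simp add: moves_def) (metis valid_final)
next
  case (Suc j)
  have set_B: "set (concat (replicate j B)) \<subseteq> \<Gamma>"
    using assms(2) by auto
  have "concat (replicate (Suc j) B) = concat (replicate j B) @ B"
    by (metis concat.simps(2) concat_append concat.simps(1) append_Nil2 replicate_append_same replicate_Suc)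
  with moves_append[OF moves_below[OF assms(1) set_B] Suc]
  show ?case
    by simp
qed

lemma pumpable_pair_intro:
  assumes u: "valid_path Q \<Gamma> E c u" "fold step u c = (S @ X, q)"
    and p1: "moves Q \<Gamma> E p1 X q (B @ X) q"
    and v: "moves Q \<Gamma> E v X q Y q'"
    and p2: "moves Q \<Gamma> E p2 (B @ Y) q' Y q'"
    and x: "valid_path Q \<Gamma> E (S @ Y, q') x"
    and B: "set B \<subseteq> \<Gamma>"
    and nonempty: "p1 \<noteq> []" "p2 \<noteq> []"
  shows "pumpable_pair Q \<Gamma> E c (u @ p1 @ v @ p2 @ x) p1 p2"
proof -
  have S: "set S \<subseteq> \<Gamma>"
    using valid_is_config[OF x] by (simp add: is_config_def)
  have "moves Q \<Gamma> E (concat (replicate j p1) @ v @ concat (replicate j p2)) X q Y q'" for j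
  proof -
    have "set (concat (replicate j B)) \<subseteq> \<Gamma>"
      using B by auto
    then have "moves Q \<Gamma> E v (concat (replicate j B) @ X) q (concat (replicate j B) @ Y) q'"
      by (rule moves_below[OF v])
    then show ?thesis
      by (intro moves_append[OF moves_pump_up[OF p1 B]] moves_append[OF _ moves_pump_down[OF p2 B]])
  qed
  then have "valid_path Q \<Gamma> E c (u @ concat (replicate j p1) @ v @ concat (replicate j p2) @ x)" for j
    using u x S by (simp add: moves_def valid_append)
  then show ?thesis
    using nonempty unfolding pumpable_pair_def by blast
qed

definition head :: "('q, 'g) config \<Rightarrow> 'q \<times> 'g" where
  "head x = (snd x, last (fst x))"

lemma push_segment:
  assumes valid: "valid_path Q \<Gamma> E c es" and "a \<le> a'" "a' \<le> length es"
    and start: "cfg c es a = (pre @ [g], q)"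
    and above: "\<forall>l \<in> {a..a'}. length pre < ht c es l"
    and head: "head (cfg c es a') = (q, g)"
  shows "\<exists>B. set B \<subseteq> \<Gamma> \<and> fst (cfg c es a') = pre @ B @ [g] \<and>
    moves Q \<Gamma> E (seg es a a') [g] q (B @ [g]) q"
proof -
  obtain R where R: "fst (cfg c es a') = pre @ R" and p: "moves Q \<Gamma> E (seg es a a') [g] q R q"
    using seg_moves[OF valid assms(2,3) start above] head by (auto simp: head_def)
  have "length pre < length (pre @ R)"
    using bspec[OF above, of a'] assms(2) R by (simp add: ht_def)
  then have "R \<noteq> []" by auto
  moreover have "last R = g"
    using head R \<open>R \<noteq> []\<close> by (simp add: head_def)
  ultimately have R_eq: "R = butlast R @ [g]"
    by (metis append_butlast_last_id)
  have "set (butlast R) \<subseteq> \<Gamma>"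
    using cfg_is_config[OF valid assms(3)] R by (auto simp: is_config_def dest: in_set_butlastD)
  then show ?thesis
    using R p R_eq by (metis append_assoc)
qed

lemma return_segment:
  assumes valid: "valid_path Q \<Gamma> E c es" and "i \<le> j" "j \<le> length es"
    and start: "cfg c es i = (S @ X, q)"
    and above: "\<forall>l \<in> {i..j}. length S < ht c es l"
    and returns: "ht c es j = Suc (length S)"
  shows "\<exists>g'. fst (cfg c es j) = S @ [g'] \<and> moves Q \<Gamma> E (seg es i j) X q [g'] (snd (cfg c es j))"
proof -
  obtain r where r: "fst (cfg c es j) = S @ r"
    and p: "moves Q \<Gamma> E (seg es i j) X q r (snd (cfg c es j))"
    using seg_moves[OF valid assms(2,3) start above] by auto
  have "length r = 1"
    using returns r by (simp add: ht_def)
  then obtain g' where "r = [g']"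
    by (metis One_nat_def length_0_conv length_Suc_conv)
  then show ?thesis
    using r p by blast
qed

lemma pumpable_pair_segments:
  assumes valid: "valid_path Q \<Gamma> E c es"
    and idx: "a < a'" "a' \<le> b'" "b' < b" "b \<le> length es"
    and ends: "cfg c es a = (S @ X, q)" "cfg c es b = (S @ Y, q')"
    and p1: "moves Q \<Gamma> E (seg es a a') X q (B @ X) q"
    and v: "moves Q \<Gamma> E (seg es a' b') X q Y q'"
    and p2: "moves Q \<Gamma> E (seg es b' b) (B @ Y) q' Y q'"
    and B: "set B \<subseteq> \<Gamma>"
  shows "\<exists>p1 p2. pumpable_pair Q \<Gamma> E c es p1 p2"
proof -
  have "seg es a a' \<noteq> []" "seg es b' b \<noteq> []"
    using idx by (auto simp: length_seg simp flip: length_0_conv)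
  moreover have "fold step (take a es) c = (S @ X, q)"
    using ends(1) by (simp add: cfg_def)
  moreover have "valid_path Q \<Gamma> E (S @ Y, q') (drop b es)"
    using valid_drop[OF valid, of b] ends(2) by simp
  ultimately have "pumpable_pair Q \<Gamma> E c
      (take a es @ seg es a a' @ seg es a' b' @ seg es b' b @ drop b es) (seg es a a') (seg es b' b)"
    using pumpable_pair_intro[OF valid_take[OF valid] _ p1 v p2 _ B] by blast
  then show ?thesis
    using seg_decompose[of a a' b' b es] idx by auto
qed

(* The segment a..a' pushes a block B, a'..b' runs above B, and b'..b pops B. *)
lemma nested_levels_pump:
  assumes valid: "valid_path Q \<Gamma> E c es"
    and idx: "a \<le> a'" "a' \<le> b'" "b' \<le> b" "b \<le> length es"
    and lev: "k < k'" "ht c es a = k" "ht c es b = k" "ht c es a' = k'" "ht c es b' = k'"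
    and above: "\<forall>l \<in> {a..b}. k \<le> ht c es l" "\<forall>l \<in> {a'..b'}. k' \<le> ht c es l"
    and heads: "head (cfg c es a') = head (cfg c es a)" "head (cfg c es b') = head (cfg c es b)"
  shows "\<exists>p1 p2. pumpable_pair Q \<Gamma> E c es p1 p2"
proof -
  define pre g q q' where "pre = butlast (fst (cfg c es a))" and "g = last (fst (cfg c es a))"
    and "q = snd (cfg c es a)" and "q' = snd (cfg c es b)"
  have a: "cfg c es a = (pre @ [g], q)"
    using cfg_is_config[OF valid, of a] idx by (simp add: pre_def g_def q_def is_config_def)
  have k: "k = Suc (length pre)"
    using lev(2) a by (simp add: ht_def)
  have above_pre: "\<forall>l \<in> {i..j}. length pre < ht c es l" if "a \<le> i" "j \<le> b" for i j
  proof
    fix l assume "l \<in> {i..j}"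
    then show "length pre < ht c es l"
      using bspec[OF above(1), of l] k that by simp
  qed
  obtain B where B: "set B \<subseteq> \<Gamma>" and a': "fst (cfg c es a') = pre @ B @ [g]"
    and p1: "moves Q \<Gamma> E (seg es a a') [g] q (B @ [g]) q"
    using push_segment[OF valid idx(1) _ a above_pre] idx heads(1) a by (auto simp: head_def)
  have k': "k' = Suc (length (pre @ B))"
    using lev(4) a' by (simp add: ht_def)
  have "cfg c es a' = ((pre @ B) @ [g], q)"
    using a' heads(1) a by (simp add: head_def prod_eq_iff)
  moreover have "\<forall>l \<in> {a'..b'}. length (pre @ B) < ht c es l"
    using above(2) k' by (simp add: Suc_le_eq)
  ultimately obtain g' where b': "fst (cfg c es b') = pre @ B @ [g']"
    and v: "moves Q \<Gamma> E (seg es a' b') [g] q [g'] q'"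
    using return_segment[OF valid idx(2) _ _ _ lev(5)[unfolded k']] idx heads(2)
    by (force simp: head_def q'_def)
  have "cfg c es b' = (pre @ B @ [g'], q')"
    using b' heads(2) by (simp add: head_def prod_eq_iff q'_def)
  then obtain g'' where b: "fst (cfg c es b) = pre @ [g'']"
    and p2: "moves Q \<Gamma> E (seg es b' b) (B @ [g']) q' [g''] q'"
    using return_segment[OF valid idx(3,4) _ above_pre lev(3)[unfolded k]] idx by (force simp: q'_def)
  have "g'' = g'"
    using heads(2) b b' by (simp add: head_def)
  have "cfg c es b = (pre @ [g'], q')"
    using b \<open>g'' = g'\<close> by (simp add: prod_eq_iff q'_def)
  moreover have "a < a'" "b' < b"
    using idx lev by (auto simp: order_le_less)
  ultimately show ?thesis
    using pumpable_pair_segments[OF valid _ idx(2) _ idx(4) a _ p1 v _ B] p2 \<open>g'' = g'\<close> by simp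
qed

definition last_at_most :: "(nat \<Rightarrow> nat) \<Rightarrow> nat \<Rightarrow> nat \<Rightarrow> nat" where
  "last_at_most h t k = Max {i. i \<le> t \<and> h i \<le> k}"

definition first_at_most :: "(nat \<Rightarrow> nat) \<Rightarrow> nat \<Rightarrow> nat \<Rightarrow> nat \<Rightarrow> nat" where
  "first_at_most h t n k = Min {i. t \<le> i \<and> i \<le> n \<and> h i \<le> k}"

lemma last_at_most_level:
  assumes up: "\<And>i. i < t \<Longrightarrow> h (Suc i) \<le> Suc (h i)"
    and "h 0 \<le> k" "k \<le> h t"
  shows "last_at_most h t k \<le> t" "h (last_at_most h t k) = k"
    and "\<And>i. last_at_most h t k < i \<Longrightarrow> i \<le> t \<Longrightarrow> k < h i"
proof -
  let ?S = "{i. i \<le> t \<and> h i \<le> k}" and ?a = "last_at_most h t k"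
  have fin: "finite ?S" by (rule finite_subset[of _ "{..t}"]) auto
  have "?a \<in> ?S"
    unfolding last_at_most_def using fin assms(2) by (intro Max_in) auto
  then have a_le: "?a \<le> t" and "h ?a \<le> k" by auto
  then show "?a \<le> t" by simp
  show above: "k < h i" if "?a < i" "i \<le> t" for i
  proof (rule ccontr)
    assume "\<not> k < h i"
    then have "i \<le> ?a"
      unfolding last_at_most_def using fin that(2) by (intro Max_ge) auto
    then show False using that(1) by simp
  qed
  show "h ?a = k"
  proof (cases "?a = t")
    case False
    then have "k < h (Suc ?a)" "h (Suc ?a) \<le> Suc (h ?a)"
      using above a_le up by (simp_all add: Suc_le_eq)
    then show ?thesis using \<open>h ?a \<le> k\<close> by simp
  qed (use \<open>h ?a \<le> k\<close> assms(3) in simp)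
qed

lemma first_at_most_level:
  assumes down: "\<And>i. t \<le> i \<Longrightarrow> i < n \<Longrightarrow> h i \<le> Suc (h (Suc i))"
    and "t \<le> n" "h n \<le> k" "k \<le> h t"
  shows "t \<le> first_at_most h t n k" "first_at_most h t n k \<le> n" "h (first_at_most h t n k) = k"
    and "\<And>i. t \<le> i \<Longrightarrow> i < first_at_most h t n k \<Longrightarrow> k < h i"
proof -
  let ?S = "{i. t \<le> i \<and> i \<le> n \<and> h i \<le> k}" and ?b = "first_at_most h t n k"
  have fin: "finite ?S" by (rule finite_subset[of _ "{..n}"]) auto
  have "?b \<in> ?S"
    unfolding first_at_most_def using fin assms(2,3) by (intro Min_in) auto
  then have t_le: "t \<le> ?b" and b_le: "?b \<le> n" and "h ?b \<le> k" by auto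
  then show "t \<le> ?b" "?b \<le> n" by simp_all
  show below: "k < h i" if "t \<le> i" "i < ?b" for i
  proof (rule ccontr)
    assume "\<not> k < h i"
    then have "?b \<le> i"
      unfolding first_at_most_def using fin that b_le by (intro Min_le) auto
    then show False using that(2) by simp
  qed
  show "h ?b = k"
  proof (cases "?b = t")
    case False
    then have "k < h (?b - 1)" "h (?b - 1) \<le> Suc (h (Suc (?b - 1)))"
      using below t_le b_le down[of "?b - 1"] by simp_all
    then show ?thesis using \<open>h ?b \<le> k\<close> False t_le by simp
  qed (use \<open>h ?b \<le> k\<close> assms(4) in simp)
qed

lemma last_at_most_mono:
  assumes "h 0 \<le> k" "k \<le> k'"
  shows "last_at_most h t k \<le> last_at_most h t k'"
proof -
  have "finite {i. i \<le> t \<and> h i \<le> k'}"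
    by (rule finite_subset[of _ "{..t}"]) auto
  moreover have "{i. i \<le> t \<and> h i \<le> k} \<subseteq> {i. i \<le> t \<and> h i \<le> k'}" "{i. i \<le> t \<and> h i \<le> k} \<noteq> {}"
    using assms by auto
  ultimately show ?thesis
    unfolding last_at_most_def by (intro Max_mono)
qed

lemma first_at_most_antimono:
  assumes "t \<le> n" "h n \<le> k" "k \<le> k'"
  shows "first_at_most h t n k' \<le> first_at_most h t n k"
proof -
  have "finite {i. t \<le> i \<and> i \<le> n \<and> h i \<le> k'}"
    by (rule finite_subset[of _ "{..n}"]) auto
  moreover have "{i. t \<le> i \<and> i \<le> n \<and> h i \<le> k} \<subseteq> {i. t \<le> i \<and> i \<le> n \<and> h i \<le> k'}"
    "{i. t \<le> i \<and> i \<le> n \<and> h i \<le> k} \<noteq> {}"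
    using assms by auto
  ultimately show ?thesis
    unfolding first_at_most_def by (intro Min_antimono)
qed

lemma excursion:
  assumes unit: "\<forall>i < n. h (Suc i) \<le> Suc (h i) \<and> h i \<le> Suc (h (Suc i))"
    and "t \<le> n" "max (h 0) (h n) \<le> k" "k \<le> h t"
  shows "last_at_most h t k \<le> t" "t \<le> first_at_most h t n k" "first_at_most h t n k \<le> n"
    and "h (last_at_most h t k) = k" "h (first_at_most h t n k) = k"
    and "\<forall>i \<in> {last_at_most h t k..first_at_most h t n k}. k \<le> h i"
proof -
  note last = last_at_most_level[of t h k] and first = first_at_most_level[of t n h k]
  have up: "h (Suc i) \<le> Suc (h i)" if "i < t" for i
    using unit that assms(2) by simp
  have down: "h i \<le> Suc (h (Suc i))" if "i < n" for i
    using unit that by simp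
  show "last_at_most h t k \<le> t" "h (last_at_most h t k) = k"
    using last up assms(3,4) by auto
  show "t \<le> first_at_most h t n k" "first_at_most h t n k \<le> n" "h (first_at_most h t n k) = k"
    using first down assms(2-4) by auto
  show "\<forall>i \<in> {last_at_most h t k..first_at_most h t n k}. k \<le> h i"
  proof
    fix i assume i: "i \<in> {last_at_most h t k..first_at_most h t n k}"
    consider "i = last_at_most h t k" | "last_at_most h t k < i" "i \<le> t"
      | "t \<le> i" "i < first_at_most h t n k" | "i = first_at_most h t n k"
      using i by fastforce
    then show "k \<le> h i"
      using last first up down assms(2-4) by cases (auto intro: less_imp_le)
  qed
qed

lemma pigeonhole_interval:
  fixes f :: "nat \<Rightarrow> 'a"
  assumes "f ` {m..H} \<subseteq> S" "finite S" "card S < Suc H - m"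
  shows "\<exists>k k'. m \<le> k \<and> k < k' \<and> k' \<le> H \<and> f k = f k'"
proof -
  have "\<not> inj_on f {m..H}"
    using card_inj_on_le[OF _ assms(1,2)] assms(3) by auto
  then show ?thesis
    unfolding inj_on_def by (metis atLeastAtMost_iff linorder_neqE_nat)
qed

definition level_heads :: "('q, 'g) config \<Rightarrow> ('q, 'g) edge list \<Rightarrow> nat \<Rightarrow> nat \<Rightarrow> ('q \<times> 'g) \<times> ('q \<times> 'g)" where
  "level_heads c es t k =
     (head (cfg c es (last_at_most (ht c es) t k)), head (cfg c es (first_at_most (ht c es) t (length es) k)))"

lemma level_heads_in:
  assumes "valid_path Q \<Gamma> E c es" "t \<le> length es"
    and "max (ht c es 0) (ht c es (length es)) \<le> k" "k \<le> ht c es t"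
  shows "level_heads c es t k \<in> (Q \<times> \<Gamma>) \<times> (Q \<times> \<Gamma>)"
proof -
  note exc = excursion[OF ht_unit_steps assms(2-4)]
  have head_in: "head x \<in> Q \<times> \<Gamma>" if "is_config Q \<Gamma> x" for x
    using that by (auto simp: head_def is_config_def)
  have "last_at_most (ht c es) t k \<le> length es" "first_at_most (ht c es) t (length es) k \<le> length es"
    using exc(1-3) assms(2) by simp_all
  then show ?thesis
    unfolding level_heads_def using head_in cfg_is_config[OF assms(1)] by blast
qed

(* Two levels with equal heads at the ends of their excursions give a pumpable
  pair, since the excursion of the higher level is nested in the lower one. *)
lemma pump_between_levels:
  assumes valid: "valid_path Q \<Gamma> E c es" and t: "t \<le> length es"
    and levels: "max (ht c es 0) (ht c es (length es)) \<le> k" "k < k'" "k' \<le> ht c es t"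
    and heads: "level_heads c es t k = level_heads c es t k'"
  shows "\<exists>p1 p2. pumpable_pair Q \<Gamma> E c es p1 p2"
proof -
  let ?a = "last_at_most (ht c es) t" and ?b = "first_at_most (ht c es) t (length es)"
  note exc = excursion[OF ht_unit_steps t]
  have "k \<le> ht c es t" "max (ht c es 0) (ht c es (length es)) \<le> k'"
    using levels by simp_all
  note exc_k = exc[OF levels(1) this(1)] and exc_k' = exc[OF this(2) levels(3)]
  have mono: "?a k \<le> ?a k'" "?b k' \<le> ?b k"
    using levels last_at_most_mono first_at_most_antimono t by auto
  have nested: "?a k' \<le> ?b k'"
    using exc_k'(1,2) by simp
  have heads': "head (cfg c es (?a k')) = head (cfg c es (?a k))"
    "head (cfg c es (?b k')) = head (cfg c es (?b k))"
    using heads by (simp_all add: level_heads_def)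
  show ?thesis
    using nested_levels_pump[OF valid mono(1) nested mono(2) exc_k(3) levels(2)
        exc_k(4,5) exc_k'(4,5) exc_k(6) exc_k'(6) heads'] .
qed

theorem lemma1:
  fixes Q :: "'q set" and \<Gamma> :: "'g set" and bt :: 'g and q0 :: 'q
    and E :: "('q, 'g) edge set" and w :: "('q, 'g) edge \<Rightarrow> int"
    and c :: "('q, 'g) config" and es :: "('q, 'g) edge list" and d :: nat
  assumes "wps Q \<Gamma> bt q0 E w"
    and "valid_path Q \<Gamma> E c es"
    and "ASH c es = d"
    and "d \<ge> (card Q * card \<Gamma>)^2"
  shows "\<exists>p1 p2. pumpable_pair Q \<Gamma> E c es p1 p2"
proof -
  have fin: "finite Q" "finite \<Gamma>" and "Q \<noteq> {}" "\<Gamma> \<noteq> {}"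
    using assms(1) by (auto simp: wps_def)
  then have N: "card ((Q \<times> \<Gamma>) \<times> (Q \<times> \<Gamma>)) = (card Q * card \<Gamma>)^2" "card Q * card \<Gamma> > 0"
    by (simp_all add: card_cartesian_product power2_eq_square card_gt_0_iff)
  obtain t where t: "t \<le> length es" "ht c es t = SH c es"
    using SH_attained by blast
  define m where "m = max (ht c es 0) (ht c es (length es))"
  have d: "d = ht c es t - m"
    using assms(3) t by (simp add: ASH_conv_ht m_def)
  have "level_heads c es t ` {m..ht c es t} \<subseteq> (Q \<times> \<Gamma>) \<times> (Q \<times> \<Gamma>)"
    using level_heads_in[OF assms(2) t(1)] by (simp add: m_def image_subset_iff)
  moreover have "card ((Q \<times> \<Gamma>) \<times> (Q \<times> \<Gamma>)) < Suc (ht c es t) - m"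
  proof -
    have "0 < (card Q * card \<Gamma>)^2"
      using N(2) by simp
    then show ?thesis
      using N(1) assms(4) d by linarith
  qed
  ultimately obtain k k' where "m \<le> k" "k < k'" "k' \<le> ht c es t"
      "level_heads c es t k = level_heads c es t k'"
    using pigeonhole_interval fin by (metis finite_SigmaI)
  then show ?thesis
    using pump_between_levels[OF assms(2) t(1)] by (simp add: m_def)
qed

end
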